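(* Let $S=\{s_1,\dots,s_N\}$ and $A$ be finite, $r:S\times A\to\mathbb{R}$, and $0<\gamma_p<\gamma<1$. Suppose that for every state-action pair $(s_n,a_k)$ we observe transition counts $c_{n,k,1},\dots,c_{n,k,N}\ge 0$ with total $C_{n,k}=\sum_{i=1}^N c_{n,k,i}>0$, and let $\hat T_{\mathrm{MLE}}(s_n,a_k,s_i)=c_{n,k,i}/C_{n,k}$. Fix a probability vector $q=(q_1,\dots,q_N)$ with all $q_i>0$, and for each $(s_n,a_k)$ place the Dirichlet prior $\mathrm{Dirichlet}(\alpha_{n,k,1},\dots,\alpha_{n,k,N})$ on $T(s_n,a_k,\cdot)$ with $$\alpha_{n,k,i}=\frac{\gamma-\gamma_p}{\gamma_p}\,C_{n,k}\,q_i .$$ Let $\hat T_{\mathrm{post}}(s_n,a_k,s_i)=\dfrac{c_{n,k,i}+\alpha_{n,k,i}}{C_{n,k}+\sum_{j}\alpha_{n,k,j}}$ be the posterior mean. Then: (i) for every $(s_n,a_k)$, $\hat T_{\mathrm{post}}(s_n,a_k,\cdot)=(1-\epsilon)\hat T_{\mathrm{MLE}}(s_n,a_k,\cdot)+\epsilon\, q$ with $\epsilon=\frac{\gamma-\gamma_p}{\gamma}$, the same for all $(s_n,a_k)$; and (ii) the MDP $(S,A,r,\hat T_{\mathrm{post}})$ planned with discount $\gamma$ and the MDP $(S,A,r,\hat T_{\mathrm{MLE}})$ planned with discount $\gamma_p$ have the same optimal policies (same $\arg\max_a Q^*(s,a)$ sets in every state). In particular, for a uniform prior ($q_i=1/N$)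 the implied prior parameters are $\alpha_{n,k,i}=\frac{\gamma-\gamma_p}{\gamma_p}\cdot\frac{C_{n,k}}{N}$, which grow with the number of observed transitions $C_{n,k}$.
   Context: Planning with discount factor $\gamma$ in an MDP with transition kernel $P$ means computing the optimal action-value function $Q^*$ solving $Q^*(s,a)=r(s,a)+\gamma\sum_{s'}P(s,a,s')\max_{a'}Q^*(s',a')$; optimal policies are those choosing actions in $\arg\max_a Q^*(s,a)$. *)

theory Defs
  imports "HOL-Analysis.Analysis"
begin

definition bellman_fixpoint ::
  "('s::finite \<Rightarrow> 'a::finite \<Rightarrow> 's \<Rightarrow> real) \<Rightarrow> real \<Rightarrow> ('s \<Rightarrow> 'a \<Rightarrow> real) \<Rightarrow> ('s \<Rightarrow> 'a \<Rightarrow> real) \<Rightarrow> bool"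
  where "bellman_fixpoint P g r Q \<longleftrightarrow>
    (\<forall>s a. Q s a = r s a + g * (\<Sum>s'\<in>UNIV. P s a s' * Max (range (Q s'))))"

definition Qstar ::
  "('s::finite \<Rightarrow> 'a::finite \<Rightarrow> 's \<Rightarrow> real) \<Rightarrow> real \<Rightarrow> ('s \<Rightarrow> 'a \<Rightarrow> real) \<Rightarrow> ('s \<Rightarrow> 'a \<Rightarrow> real)"
  where "Qstar P g r = (THE Q. bellman_fixpoint P g r Q)"

definition opt_actions ::
  "('s::finite \<Rightarrow> 'a::finite \<Rightarrow> 's \<Rightarrow> real) \<Rightarrow> real \<Rightarrow> ('s \<Rightarrow> 'a \<Rightarrow> real) \<Rightarrow> 's \<Rightarrow> 'a set"
  where "opt_actions P g r s =
    {a. Qstar P g r s a = Max (range (Qstar P g r s))}"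

definition count_total :: "('s::finite \<Rightarrow> 'a \<Rightarrow> 's \<Rightarrow> nat) \<Rightarrow> 's \<Rightarrow> 'a \<Rightarrow> real"
  where "count_total c s a = real (\<Sum>i\<in>UNIV. c s a i)"

definition T_mle :: "('s::finite \<Rightarrow> 'a \<Rightarrow> 's \<Rightarrow> nat) \<Rightarrow> 's \<Rightarrow> 'a \<Rightarrow> 's \<Rightarrow> real"
  where "T_mle c s a i = real (c s a i) / count_total c s a"

definition prior_alpha ::
  "real \<Rightarrow> real \<Rightarrow> ('s::finite \<Rightarrow> real) \<Rightarrow> ('s \<Rightarrow> 'a \<Rightarrow> 's \<Rightarrow> nat) \<Rightarrow> 's \<Rightarrow> 'a \<Rightarrow> 's \<Rightarrow> real"
  where "prior_alpha g gp q c s a i = (g - gp) / gp * count_total c s a * q i"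

definition T_post ::
  "real \<Rightarrow> real \<Rightarrow> ('s::finite \<Rightarrow> real) \<Rightarrow> ('s \<Rightarrow> 'a \<Rightarrow> 's \<Rightarrow> nat) \<Rightarrow> 's \<Rightarrow> 'a \<Rightarrow> 's \<Rightarrow> real"
  where "T_post g gp q c s a i =
    (real (c s a i) + prior_alpha g gp q c s a i) /
    (count_total c s a + (\<Sum>j\<in>UNIV. prior_alpha g gp q c s a j))"

end

theory Submission
  imports Defs "HOL-Probability.Discrete_Topology"
begin

text \<open>Mixing the kernel with a fixed distribution q, P' = (1 - \<epsilon>) P + \<epsilon> q, while raising the
  discount from gp = (1 - \<epsilon>) g to g changes Q* only by an additive constant. Indeed, if Q solves
  the Bellman equation for (P, gp), then in the Bellman update for (P', g) applied to Q + K the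
  P-part reproduces gp times the P-average of max Q plus gp K, while the q-part adds the term
  (g - gp) (\<Sum>s'. q s' max Q(s') + K), which is the same for every state-action pair; choosing
  K = (g - gp) \<Sum>s'. q s' max Q(s') / (1 - g) makes Q + K a fixed point. A constant shift does
  not change any argmax. The Dirichlet posterior mean with prior parameters proportional to the
  counts is exactly such a mixture of the maximum-likelihood kernel with q, for
  \<epsilon> = (g - gp) / g.\<close>

definition stochastic_kernel :: "('s::finite \<Rightarrow> 'a \<Rightarrow> 's \<Rightarrow> real) \<Rightarrow> bool"
  where "stochastic_kernel P \<longleftrightarrow>
    (\<forall>s a s'. 0 \<le> P s a s') \<and> (\<forall>s a. (\<Sum>s'\<in>UNIV. P s a s') = 1)"

definition bellman_op ::
  "('s::finite \<Rightarrow> 'a::finite \<Rightarrow> 's \<Rightarrow> real) \<Rightarrow> real \<Rightarrow> ('s \<Rightarrow> 'a \<Rightarrow> real) \<Rightarrow>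
    ('s \<Rightarrow> 'a \<Rightarrow> real) \<Rightarrow> ('s \<Rightarrow> 'a \<Rightarrow> real)"
  where "bellman_op P g r Q = (\<lambda>s a. r s a + g * (\<Sum>s'\<in>UNIV. P s a s' * Max (range (Q s'))))"

lemma bellman_fixpoint_iff: "bellman_fixpoint P g r Q \<longleftrightarrow> bellman_op P g r Q = Q"
  unfolding bellman_fixpoint_def bellman_op_def fun_eq_iff by metis

lemma Max_range_le_add:
  fixes f h :: "'a::finite \<Rightarrow> real"
  assumes "\<And>a. f a \<le> h a + d"
  shows "Max (range f) \<le> Max (range h) + d"
proof -
  have "Max (range f) \<in> range f" by (intro Max_in) auto
  then obtain a where "Max (range f) = f a" by blast
  moreover have "h a \<le> Max (range h)" by (intro Max_ge) auto
  ultimately show ?thesis using assms[of a] by linarith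
qed

lemma abs_Max_range_diff_le:
  fixes f h :: "'a::finite \<Rightarrow> real"
  assumes "\<And>a. \<bar>f a - h a\<bar> \<le> d"
  shows "\<bar>Max (range f) - Max (range h)\<bar> \<le> d"
proof -
  have "f a \<le> h a + d" "h a \<le> f a + d" for a
    using assms[of a] by linarith+
  then have "Max (range f) \<le> Max (range h) + d" "Max (range h) \<le> Max (range f) + d"
    by (blast intro: Max_range_le_add)+
  then show ?thesis by linarith
qed

lemma bellman_op_contraction:
  assumes P: "stochastic_kernel P" and "0 \<le> g"
    and d: "\<And>s' a'. \<bar>Q1 s' a' - Q2 s' a'\<bar> \<le> d"
  shows "\<bar>bellman_op P g r Q1 s a - bellman_op P g r Q2 s a\<bar> \<le> g * d"
proof -
  define D where "D s' = Max (range (Q1 s')) - Max (range (Q2 s'))" for s'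
  have D: "\<bar>D s'\<bar> \<le> d" for s'
    unfolding D_def by (rule abs_Max_range_diff_le) (rule d)
  have "\<bar>\<Sum>s'\<in>UNIV. P s a s' * D s'\<bar> \<le> (\<Sum>s'\<in>UNIV. \<bar>P s a s' * D s'\<bar>)"
    by (rule sum_abs)
  also have "\<dots> \<le> (\<Sum>s'\<in>UNIV. P s a s' * d)"
    using P D by (intro sum_mono) (simp add: stochastic_kernel_def abs_mult mult_left_mono)
  also have "\<dots> = d"
    using P by (simp add: stochastic_kernel_def sum_distrib_right[symmetric])
  finally have "\<bar>\<Sum>s'\<in>UNIV. P s a s' * D s'\<bar> \<le> d" .
  moreover have "bellman_op P g r Q1 s a - bellman_op P g r Q2 s a
      = g * (\<Sum>s'\<in>UNIV. P s a s' * D s')"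
    by (simp add: bellman_op_def D_def algebra_simps sum_subtractf)
  ultimately show ?thesis
    using \<open>0 \<le> g\<close> by (simp add: abs_mult mult_left_mono)
qed

lemma bellman_fixpoint_unique:
  assumes P: "stochastic_kernel P" and g: "0 \<le> g" "g < 1"
    and "bellman_fixpoint P g r Q1" and "bellman_fixpoint P g r Q2"
  shows "Q1 = Q2"
proof -
  define d where "d = Max (range (\<lambda>(s, a). \<bar>Q1 s a - Q2 s a\<bar>))"
  have d: "\<bar>Q1 s a - Q2 s a\<bar> \<le> d" for s a
    unfolding d_def by (rule Max_ge) (auto intro!: image_eqI[where x = "(s, a)"])
  have "d \<in> range (\<lambda>(s, a). \<bar>Q1 s a - Q2 s a\<bar>)"
    unfolding d_def by (intro Max_in) auto
  then obtain s0 a0 where d0: "d = \<bar>Q1 s0 a0 - Q2 s0 a0\<bar>" by auto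
  have "\<bar>bellman_op P g r Q1 s0 a0 - bellman_op P g r Q2 s0 a0\<bar> \<le> g * d"
    by (rule bellman_op_contraction[OF P g(1)]) (rule d)
  then have "(1 - g) * d \<le> 0"
    using assms(4,5) d0 by (simp add: bellman_fixpoint_iff algebra_simps)
  with g d0 have "d = 0"
    by (simp add: mult_le_0_iff)
  then show ?thesis using d by (auto simp: fun_eq_iff)
qed

text \<open>Existence comes from Banach's fixed point theorem; the functions on the finite set of
  state-action pairs are viewed as bounded continuous functions on a discrete space, which form
  a complete space whose metric is the sup distance.\<close>

definition bcontfun_of :: "('s \<Rightarrow> 'a \<Rightarrow> real) \<Rightarrow> (('s \<times> 'a) discrete \<Rightarrow>\<^sub>C real)"
  where "bcontfun_of Q = Bcontfun (\<lambda>x. case_prod Q (of_discrete x))"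

definition of_bcontfun :: "(('s \<times> 'a) discrete \<Rightarrow>\<^sub>C real) \<Rightarrow> ('s \<Rightarrow> 'a \<Rightarrow> real)"
  where "of_bcontfun f = (\<lambda>s a. f (discrete (s, a)))"

lemma of_bcontfun_bcontfun_of [simp]:
  fixes Q :: "'s::finite \<Rightarrow> 'a::finite \<Rightarrow> real"
  shows "of_bcontfun (bcontfun_of Q) = Q"
proof -
  let ?f = "\<lambda>x. case_prod Q (of_discrete x)"
  have "continuous_on UNIV ?f"
    by (simp add: continuous_on_open_invariant open_discrete)
  moreover have "norm (?f x) \<le> Max (range (\<lambda>(s, a). norm (Q s a)))" for x
    by (rule Max_ge) (auto split: prod.splits intro!: image_eqI)
  ultimately have "?f \<in> bcontfun" by (intro bcontfun_normI) auto
  then show ?thesis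
    by (simp add: of_bcontfun_def bcontfun_of_def Bcontfun_inverse discrete_inverse)
qed

lemma abs_of_bcontfun_diff_le: "\<bar>of_bcontfun f s a - of_bcontfun h s a\<bar> \<le> dist f h"
  using dist_bounded[of f "discrete (s, a)" h] by (simp add: of_bcontfun_def dist_real_def)

lemma bellman_fixpoint_exists:
  fixes P :: "'s::finite \<Rightarrow> 'a::finite \<Rightarrow> 's \<Rightarrow> real"
  assumes P: "stochastic_kernel P" and g: "0 \<le> g" "g < 1"
  shows "\<exists>Q. bellman_fixpoint P g r Q"
proof -
  define F where "F f = bcontfun_of (bellman_op P g r (of_bcontfun f))"
    for f :: "('s \<times> 'a) discrete \<Rightarrow>\<^sub>C real"
  have "dist (F f) (F h) \<le> g * dist f h" for f h
  proof (rule dist_bound)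
    fix x :: "('s \<times> 'a) discrete"
    obtain s a where x: "x = discrete (s, a)"
      by (metis discrete_cases surj_pair)
    have "F f x = bellman_op P g r (of_bcontfun f) s a" for f
      using of_bcontfun_bcontfun_of[of "bellman_op P g r (of_bcontfun f)"]
      by (simp add: F_def of_bcontfun_def x fun_eq_iff)
    then show "dist (F f x) (F h x) \<le> g * dist f h"
      using bellman_op_contraction[OF P g(1) abs_of_bcontfun_diff_le]
      by (simp add: dist_real_def)
  qed
  then obtain f where "F f = f" using banach_fix_type[OF g] by blast
  then have "bellman_op P g r (of_bcontfun f) = of_bcontfun f"
    by (metis F_def of_bcontfun_bcontfun_of)
  then show ?thesis by (auto simp: bellman_fixpoint_iff)
qed

lemma Qstar_eqI:
  assumes "stochastic_kernel P" "0 \<le> g" "g < 1" and "bellman_fixpoint P g r Q"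
  shows "Qstar P g r = Q"
  unfolding Qstar_def using assms bellman_fixpoint_unique by blast

lemma bellman_fixpoint_Qstar:
  assumes "stochastic_kernel P" "0 \<le> g" "g < 1"
  shows "bellman_fixpoint P g r (Qstar P g r)"
  using bellman_fixpoint_exists[OF assms] Qstar_eqI[OF assms] by metis

lemma stochastic_kernel_mixture:
  assumes "stochastic_kernel P" "\<And>i. 0 \<le> q i" "(\<Sum>i\<in>UNIV. q i) = 1" "0 \<le> \<epsilon>" "\<epsilon> \<le> 1"
  shows "stochastic_kernel (\<lambda>s a i. (1 - \<epsilon>) * P s a i + \<epsilon> * q i)"
  using assms by (simp add: stochastic_kernel_def sum.distrib sum_distrib_left[symmetric])

lemma bellman_fixpoint_mixture:
  fixes P :: "'s::finite \<Rightarrow> 'a::finite \<Rightarrow> 's \<Rightarrow> real"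
  assumes P1: "\<And>s a. (\<Sum>s'\<in>UNIV. P s a s') = 1" and q1: "(\<Sum>i\<in>UNIV. q i) = 1"
    and gp: "gp = (1 - \<epsilon>) * g" and "g \<noteq> 1"
    and Q: "bellman_fixpoint P gp r Q"
  defines "K \<equiv> \<epsilon> * g * (\<Sum>s'\<in>UNIV. q s' * Max (range (Q s'))) / (1 - g)"
  shows "bellman_fixpoint (\<lambda>s a i. (1 - \<epsilon>) * P s a i + \<epsilon> * q i) g r (\<lambda>s a. Q s a + K)"
  unfolding bellman_fixpoint_def
proof (intro allI)
  fix s a
  define M where "M s' = Max (range (Q s'))" for s'
  define S where "S = (\<Sum>s'\<in>UNIV. q s' * M s')"
  have K: "K = g * K + \<epsilon> * g * S"
    using \<open>g \<noteq> 1\<close> by (simp add: K_def S_def M_def field_simps)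
  have shift: "Max (range (\<lambda>a. Q s' a + K)) = M s' + K" for s'
    using Max_add_commute[of "UNIV :: 'a set" "Q s'" K] by (simp add: M_def)
  define PM where "PM = (\<Sum>s'\<in>UNIV. P s a s' * M s')"
  have "(\<Sum>s'\<in>UNIV. ((1 - \<epsilon>) * P s a s' + \<epsilon> * q s') * (M s' + K))
      = (\<Sum>s'\<in>UNIV. (1 - \<epsilon>) * (P s a s' * M s') + (1 - \<epsilon>) * K * P s a s'
          + \<epsilon> * (q s' * M s') + \<epsilon> * K * q s')"
    by (rule sum.cong) (simp_all add: algebra_simps)
  also have "\<dots> = (1 - \<epsilon>) * PM + (1 - \<epsilon>) * K + \<epsilon> * S + \<epsilon> * K"
    using P1 q1 by (simp add: sum.distrib sum_distrib_left[symmetric] PM_def S_def)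
  finally have sum: "(\<Sum>s'\<in>UNIV. ((1 - \<epsilon>) * P s a s' + \<epsilon> * q s') * (M s' + K))
      = (1 - \<epsilon>) * PM + (1 - \<epsilon>) * K + \<epsilon> * S + \<epsilon> * K" .
  have "g * (\<Sum>s'\<in>UNIV. ((1 - \<epsilon>) * P s a s' + \<epsilon> * q s') * (M s' + K))
      = gp * PM + (g * K + \<epsilon> * g * S)"
    unfolding sum by (simp add: gp algebra_simps)
  also have "\<dots> = gp * PM + K"
    using K by linarith
  moreover have "Q s a = r s a + gp * PM"
    using Q unfolding bellman_fixpoint_def PM_def M_def by blast
  ultimately show "Q s a + K = r s a + g *
      (\<Sum>s'\<in>UNIV. ((1 - \<epsilon>) * P s a s' + \<epsilon> * q s') * Max (range (\<lambda>a. Q s' a + K)))"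
    by (simp add: shift)
qed

lemma opt_actions_mixture:
  assumes P: "stochastic_kernel P" and q: "\<And>i. 0 \<le> q i" "(\<Sum>i\<in>UNIV. q i) = 1"
    and \<epsilon>: "0 \<le> \<epsilon>" "\<epsilon> \<le> 1" and g: "0 \<le> g" "g < 1"
  shows "opt_actions (\<lambda>s a i. (1 - \<epsilon>) * P s a i + \<epsilon> * q i) g r s
    = opt_actions P ((1 - \<epsilon>) * g) r s"
proof -
  let ?P' = "\<lambda>s a i. (1 - \<epsilon>) * P s a i + \<epsilon> * q i"
  let ?Q = "Qstar P ((1 - \<epsilon>) * g) r"
  have "0 \<le> (1 - \<epsilon>) * g" "(1 - \<epsilon>) * g < 1"
    using \<epsilon> g mult_left_le_one_le[of g "1 - \<epsilon>"] by auto
  then have Q: "bellman_fixpoint P ((1 - \<epsilon>) * g) r ?Q"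
    by (rule bellman_fixpoint_Qstar[OF P])
  have P1: "\<And>s a. (\<Sum>s'\<in>UNIV. P s a s') = 1"
    using P by (simp add: stochastic_kernel_def)
  define K where "K = \<epsilon> * g * (\<Sum>s'\<in>UNIV. q s' * Max (range (?Q s'))) / (1 - g)"
  have "bellman_fixpoint ?P' g r (\<lambda>s a. ?Q s a + K)"
    unfolding K_def using bellman_fixpoint_mixture[OF P1 q(2) refl _ Q] g by simp
  then have "Qstar ?P' g r = (\<lambda>s a. ?Q s a + K)"
    by (rule Qstar_eqI[OF stochastic_kernel_mixture[OF P q \<epsilon>] g])
  then show ?thesis
    using Max_add_commute[of "UNIV :: 'b set" "?Q s" K] by (simp add: opt_actions_def)
qed

lemma stochastic_kernel_T_mle:
  assumes "\<And>s a. count_total c s a > 0"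
  shows "stochastic_kernel (T_mle c)"
proof -
  have "0 \<le> T_mle c s a i" for s a i
    using assms[of s a] by (simp add: T_mle_def)
  moreover have "(\<Sum>i\<in>UNIV. T_mle c s a i) = 1" for s a
    using assms[of s a] by (simp add: T_mle_def sum_divide_distrib[symmetric] count_total_def)
  ultimately show ?thesis by (simp add: stochastic_kernel_def)
qed

lemma T_post_eq_mixture:
  assumes "0 < gp" "gp < g" "count_total c s a > 0" "(\<Sum>i\<in>UNIV. q i) = 1"
  shows "T_post g gp q c s a i = (1 - (g - gp) / g) * T_mle c s a i + ((g - gp) / g) * q i"
proof -
  have "(\<Sum>j\<in>UNIV. prior_alpha g gp q c s a j) = (g - gp) / gp * count_total c s a"
    using assms(4) by (simp add: prior_alpha_def sum_distrib_left[symmetric]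
        del: times_divide_eq_left)
  with assms show ?thesis
    by (simp add: T_post_def T_mle_def prior_alpha_def field_simps)
qed

theorem mainTheorem2:
  fixes r :: "'s::finite \<Rightarrow> 'a::finite \<Rightarrow> real"
    and c :: "'s \<Rightarrow> 'a \<Rightarrow> 's \<Rightarrow> nat"
    and q :: "'s \<Rightarrow> real"
    and g gp :: real
  assumes "0 < gp" and "gp < g" and "g < 1"
    and "\<And>s a. count_total c s a > 0"
    and "\<And>i. q i > 0" and "(\<Sum>i\<in>UNIV. q i) = 1"
  shows "(\<forall>s a i. T_post g gp q c s a i =
             (1 - (g - gp) / g) * T_mle c s a i + ((g - gp) / g) * q i)
       \<and> (\<forall>s. opt_actions (T_post g gp q c) g r s = opt_actions (T_mle c) gp r s)
       \<and> (q = (\<lambda>_. 1 / real CARD('s)) \<longrightarrow>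
            (\<forall>s a i. prior_alpha g gp q c s a i
                 = (g - gp) / gp * (count_total c s a / real CARD('s))))"
proof -
  define \<epsilon> where "\<epsilon> = (g - gp) / g"
  have mixture: "T_post g gp q c = (\<lambda>s a i. (1 - \<epsilon>) * T_mle c s a i + \<epsilon> * q i)"
    using T_post_eq_mixture[OF assms(1,2,4) assms(6)] by (simp add: \<epsilon>_def fun_eq_iff)
  have \<epsilon>: "0 \<le> \<epsilon>" "\<epsilon> \<le> 1" and gp: "gp = (1 - \<epsilon>) * g"
    using assms by (auto simp: \<epsilon>_def field_simps)
  have "opt_actions (T_post g gp q c) g r s = opt_actions (T_mle c) ((1 - \<epsilon>) * g) r s" for s
    unfolding mixture using assms(1-3,5) \<epsilon>
    by (intro opt_actions_mixture stochastic_kernel_T_mle assms(4,6)) (auto intro: less_imp_le)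
  then have "opt_actions (T_post g gp q c) g r s = opt_actions (T_mle c) gp r s" for s
    by (simp add: gp)
  then show ?thesis
    using mixture by (simp add: \<epsilon>_def prior_alpha_def)
qed

end
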